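(* Let $A\in\mathbb{C}^{2\times2}$. The operator $D_A$ decouples into a direct sum $D_A=T_+\oplus T_-$ of an operator $T_+$ in $L^2(\mathbb{R}_+;\mathbb{C}^2)$ and an operator $T_-$ in $L^2(\mathbb{R}_-;\mathbb{C}^2)$ if and only if either $A=\pm 2i\sigma_1$, or neither of the matrices $2i\sigma_1-A$ and $2i\sigma_1+A$ is invertible. In that case $D_A=D_A^+\oplus D_A^-$, where $D_A^\pm$ is the operator in $L^2(\mathbb{R}_\pm;\mathbb{C}^2)$ with domain $\{\psi_\pm\in H^1(\mathbb{R}_\pm;\mathbb{C}^2): (2i\sigma_1\mp A)\psi_\pm(0)=0\}$ acting by $D_A^\pm\psi_\pm=\mathscr{D}\psi_\pm$.
   Context: Let $\sigma_0=I_2$, $\sigma_1=\begin{pmatrix}0&1\\1&0\end{pmatrix}$, $\sigma_3=\begin{pmatrix}1&0\\0&-1\end{pmatrix}$. Fix $m\in\mathbb{R}$. Identify $L^2(\mathbb{R};\mathbb{C}^2)=L^2(\mathbb{R}_-;\mathbb{C}^2)\oplus L^2(\mathbb{R}_+;\mathbb{C}^2)$, and for $\psi=\psi_-\oplus\psi_+\in H^1(\mathbb{R}_-;\mathbb{C}^2)\oplus H^1(\mathbb{R}_+;\mathbb{C}^2)$ let $\psi(0_\pm)\in\mathbb{C}^2$ denote the one-sided traces at $0$. Let $\mathscr{D}=-i\sigma_1\frac{d}{dx}+m\sigma_3$. For $A\in\mathbb{C}^{2\times2}$, $D_A$ is the operator in $L^2(\mathbb{R};\mathbb{C}^2)$ with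 domain $\{\psi=\psi_-\oplus\psi_+\in H^1(\mathbb{R}_-;\mathbb{C}^2)\oplus H^1(\mathbb{R}_+;\mathbb{C}^2) : (2i\sigma_1-A)\psi(0_+)=(2i\sigma_1+A)\psi(0_-)\}$ and action $D_A\psi=\mathscr{D}\psi_-\oplus\mathscr{D}\psi_+$. *)

theory Defs
  imports "HOL-Analysis.Analysis"
begin

type_synonym cvec = "complex^2"
type_synonym cmat = "complex^2^2"

definition sig1 :: cmat where
  "sig1 = (\<chi> i j. if i = j then 0 else 1)"

definition sig3 :: cmat where
  "sig3 = (\<chi> i j. if i = j then (if i = 1 then 1 else -1) else 0)"

definition smat :: "complex \<Rightarrow> cmat \<Rightarrow> cmat" where
  "smat c M = (\<chi> i j. c * M $ i $ j)"

text \<open>Elements of L2(S;C^2), S a half-line, represented by functions real => C^2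
  vanishing outside S, measurable and square integrable.\<close>
definition L2_on :: "real set \<Rightarrow> (real \<Rightarrow> cvec) \<Rightarrow> bool" where
  "L2_on S f \<longleftrightarrow> (\<forall>x. x \<notin> S \<longrightarrow> f x = 0) \<and> f \<in> borel_measurable lborel
      \<and> integrable lborel (\<lambda>x. (norm (f x))^2)"

text \<open>H1 on the half-lines: f is the continuous representative, g its (weak) derivative in L2.
  The trace at 0 is f 0.\<close>
definition H1_pos :: "(real \<Rightarrow> cvec) \<Rightarrow> (real \<Rightarrow> cvec) \<Rightarrow> bool" where
  "H1_pos f g \<longleftrightarrow> L2_on {0..} f \<and> L2_on {0..} g \<and>
      (\<forall>x\<ge>0. f x = f 0 + integral {0..x} g)"

definition H1_neg :: "(real \<Rightarrow> cvec) \<Rightarrow> (real \<Rightarrow> cvec) \<Rightarrow> bool" where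
  "H1_neg f g \<longleftrightarrow> L2_on {..0} f \<and> L2_on {..0} g \<and>
      (\<forall>x\<le>0. f x = f 0 - integral {x..0} g)"

definition dirac_out :: "real set \<Rightarrow> real \<Rightarrow> (real \<Rightarrow> cvec) \<Rightarrow> (real \<Rightarrow> cvec) \<Rightarrow> real \<Rightarrow> cvec" where
  "dirac_out S m f g = (\<lambda>x. if x \<in> S then (- \<i>) *s (sig1 *v g x) + m *\<^sub>R (sig3 *v f x) else 0)"

text \<open>Operators are represented by their graphs. The graph of D_A in
  L2(R_-;C^2) (+) L2(R_+;C^2): elements ((psi_-, psi_+), (phi_-, phi_+)).\<close>
definition graph_DA :: "real \<Rightarrow> cmat \<Rightarrow>
   (((real \<Rightarrow> cvec) \<times> (real \<Rightarrow> cvec)) \<times> ((real \<Rightarrow> cvec) \<times> (real \<Rightarrow> cvec))) set" where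
  "graph_DA m A = {((pm, pp), (qm, qp)). \<exists>gm gp. H1_neg pm gm \<and> H1_pos pp gp \<and>
      (smat (2*\<i>) sig1 - A) *v pp 0 = (smat (2*\<i>) sig1 + A) *v pm 0 \<and>
      qm = dirac_out {..0} m pm gm \<and> qp = dirac_out {0..} m pp gp}"

definition graph_Dplus :: "real \<Rightarrow> cmat \<Rightarrow> ((real \<Rightarrow> cvec) \<times> (real \<Rightarrow> cvec)) set" where
  "graph_Dplus m A = {(p, q). \<exists>g. H1_pos p g \<and> (smat (2*\<i>) sig1 - A) *v p 0 = 0 \<and>
      q = dirac_out {0..} m p g}"

definition graph_Dminus :: "real \<Rightarrow> cmat \<Rightarrow> ((real \<Rightarrow> cvec) \<times> (real \<Rightarrow> cvec)) set" where
  "graph_Dminus m A = {(p, q). \<exists>g. H1_neg p g \<and> (smat (2*\<i>) sig1 + A) *v p 0 = 0 \<and>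
      q = dirac_out {..0} m p g}"

definition osum :: "('a \<times> 'b) set \<Rightarrow> ('c \<times> 'd) set \<Rightarrow> (('a \<times> 'c) \<times> ('b \<times> 'd)) set" where
  "osum Tm Tp = {((pm, pp), (qm, qp)). (pm, qm) \<in> Tm \<and> (pp, qp) \<in> Tp}"

end

theory Submission imports Defs begin

text \<open>The graph of a direct sum is closed under exchanging the component in
  \<open>L\<^sup>2(\<real>\<^sub>+)\<close> of two of its elements. Feeding an element of \<open>D\<^sub>A\<close> with
  boundary values \<open>\<psi>(0\<^sub>-) = x\<close>, \<open>\<psi>(0\<^sub>+) = y\<close> and the zero element into this exchange, a
  decoupled \<open>D\<^sub>A\<close> forces \<open>(2i\<sigma>\<^sub>1 + A) x = 0\<close> whenever \<open>(2i\<sigma>\<^sub>1 - A) y = (2i\<sigma>\<^sub>1 + A) x\<close>: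
  the boundary condition must itself split into two one-sided conditions. Conversely, if it
  does, \<open>D\<^sub>A = D\<^sub>A\<^sup>- \<oplus> D\<^sub>A\<^sup>+\<close> by definition. So the theorem reduces to deciding when the
  ranges of \<open>2i\<sigma>\<^sub>1 - A\<close> and \<open>2i\<sigma>\<^sub>1 + A\<close> intersect trivially. If one of the two matrices is
  invertible, this happens only when the other one vanishes. If both are singular, their
  ranges are lines whose sum is the range of the invertible matrix \<open>4i\<sigma>\<^sub>1\<close>, so they meet in
  \<open>0\<close>.\<close>

lemma singular_2x2_range:
  fixes P :: "'a::field^2^2"
  assumes "det P = 0"
  shows "P$2$2 * (P *v y)$1 - P$1$2 * (P *v y)$2 = 0"
    and "P$1$1 * (P *v y)$2 - P$2$1 * (P *v y)$1 = 0"
  using assms by (auto simp: det_2 matrix_vector_mult_def sum_2) algebra+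

lemma singular_2x2_ranges_disjoint:
  fixes P M :: "'a::field^2^2"
  assumes P: "det P = 0" and M: "det M = 0" and PM: "det (P + M) \<noteq> 0"
    and eq: "P *v y = M *v x"
  shows "M *v x = 0"
proof -
  define u w where "u = (M *v x)$1" and "w = (M *v x)$2"
  \<comment> \<open>The adjugate of a \<open>2\<times>2\<close> matrix is linear in it and kills the range of a singular one.\<close>
  have "(P + M)$2$2 * u - (P + M)$1$2 * w = 0" "(P + M)$1$1 * w - (P + M)$2$1 * u = 0"
    using singular_2x2_range[OF P, of y] singular_2x2_range[OF M, of x]
    unfolding u_def w_def eq by (simp_all add: algebra_simps)
  then have "det (P + M) * u = 0" "det (P + M) * w = 0"
    unfolding det_2 by algebra+
  then show ?thesis
    using PM by (simp add: u_def w_def vec_eq_iff forall_2)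
qed

lemma invertible_range_meets_nonzero:
  fixes P M :: "'a::field^'n^'n"
  assumes P: "invertible P" and M: "M \<noteq> 0"
  obtains x y where "P *v y = M *v x" and "M *v x \<noteq> 0"
proof -
  obtain x where x: "M *v x \<noteq> 0"
    using M matrix_eq[of M 0] by auto
  have "surj ((*v) P)"
    using P matrix_right_invertible_surjective unfolding invertible_def by blast
  then obtain y where "P *v y = M *v x"
    by (metis surjD)
  then show thesis
    using x that by blast
qed

lemma boundary_condition_splits_iff:
  fixes A :: cmat
  defines "S \<equiv> smat (2*\<i>) sig1"
  shows "(\<forall>x y. (S - A) *v y = (S + A) *v x \<longrightarrow> (S + A) *v x = 0) \<longleftrightarrow>
         (A = S \<or> A = - S \<or> (\<not> invertible (S - A) \<and> \<not> invertible (S + A)))"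
proof
  assume split: "\<forall>x y. (S - A) *v y = (S + A) *v x \<longrightarrow> (S + A) *v x = 0"
  show "A = S \<or> A = - S \<or> (\<not> invertible (S - A) \<and> \<not> invertible (S + A))"
  proof (rule ccontr)
    assume "\<not> ?thesis"
    then have "S - A \<noteq> 0" "S + A \<noteq> 0" "invertible (S - A) \<or> invertible (S + A)"
      by (auto simp: eq_neg_iff_add_eq_0 add.commute)
    then show False
      using split invertible_range_meets_nonzero[of "S - A" "S + A"]
        invertible_range_meets_nonzero[of "S + A" "S - A"]
      by metis
  qed
next
  assume C: "A = S \<or> A = - S \<or> (\<not> invertible (S - A) \<and> \<not> invertible (S + A))"
  have "det ((S - A) + (S + A)) \<noteq> 0"
    by (simp add: S_def det_2 smat_def sig1_def)
  then show "\<forall>x y. (S - A) *v y = (S + A) *v x \<longrightarrow> (S + A) *v x = 0"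
    using C singular_2x2_ranges_disjoint[of "S - A" "S + A"]
    by (auto simp: invertible_det_nz)
qed

lemma L2_on_restrict_continuous:
  fixes h :: "real \<Rightarrow> cvec"
  assumes h: "continuous_on {a..b} h" and sub: "{a..b} \<subseteq> S"
  shows "L2_on S (\<lambda>x. if x \<in> {a..b} then h x else 0)"
proof -
  have "(\<lambda>x. if x \<in> {a..b} then h x else 0) \<in> borel_measurable borel"
    by (intro borel_measurable_continuous_on_if h continuous_intros) auto
  moreover have "set_integrable lborel {a..b} (\<lambda>x. (norm (h x))^2)"
    by (intro borel_integrable_atLeastAtMost' continuous_intros h)
  then have "integrable lborel (\<lambda>x. (norm (if x \<in> {a..b} then h x else 0))^2)"
    unfolding set_integrable_def
    by (rule Bochner_Integration.integrable_cong[THEN iffD1, rotated 2])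
       (auto split: split_indicator)
  ultimately show ?thesis
    using sub unfolding L2_on_def by (auto simp: measurable_lborel1)
qed

lemma H1_pos_with_trace:
  fixes v :: cvec
  obtains p g where "H1_pos p g" and "p 0 = v"
proof -
  define p where "p = (\<lambda>x::real. if x \<in> {0..1} then (1 - x) *\<^sub>R v else 0)"
  define g where "g = (\<lambda>x::real. if x \<in> {0..1} then - v else 0)"
  have "p x = p 0 + integral {0..x} g" if "x \<ge> 0" for x
  proof -
    have "integral {0..x} g = integral ({0..1} \<inter> {0..x}) (\<lambda>_. - v)"
      unfolding g_def by (rule integral_restrict_Int)
    also have "{0..1} \<inter> {0..x} = {0..min 1 x}" by auto
    finally have "integral {0..x} g = min 1 x *\<^sub>R (- v)" using that by simp
    then show ?thesis using that by (auto simp: p_def min_def algebra_simps)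
  qed
  moreover have "L2_on {0..} p" "L2_on {0..} g"
    unfolding p_def g_def by (intro L2_on_restrict_continuous continuous_intros; auto)+
  ultimately have "H1_pos p g"
    unfolding H1_pos_def by blast
  then show thesis
    using that by (simp add: p_def)
qed

lemma H1_neg_with_trace:
  fixes v :: cvec
  obtains p g where "H1_neg p g" and "p 0 = v"
proof -
  define p where "p = (\<lambda>x::real. if x \<in> {-1..0} then (1 + x) *\<^sub>R v else 0)"
  define g where "g = (\<lambda>x::real. if x \<in> {-1..0} then v else 0)"
  have "p x = p 0 - integral {x..0} g" if "x \<le> 0" for x
  proof -
    have "integral {x..0} g = integral ({-1..0} \<inter> {x..0}) (\<lambda>_. v)"
      unfolding g_def by (rule integral_restrict_Int)
    also have "{-1..0} \<inter> {x..0} = {max (-1) x..0}" by auto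
    finally have "integral {x..0} g = (- max (-1) x) *\<^sub>R v" using that by simp
    then show ?thesis using that by (auto simp: p_def max_def algebra_simps)
  qed
  moreover have "L2_on {..0} p" "L2_on {..0} g"
    unfolding p_def g_def by (intro L2_on_restrict_continuous continuous_intros; auto)+
  ultimately have "H1_neg p g"
    unfolding H1_neg_def by blast
  then show thesis
    using that by (simp add: p_def)
qed

lemma H1_zero: "H1_pos (\<lambda>_. 0) (\<lambda>_. 0)" "H1_neg (\<lambda>_. 0) (\<lambda>_. 0)"
  by (auto simp: H1_pos_def H1_neg_def L2_on_def)

lemma osum_exchange:
  assumes "((pm, pp), (qm, qp)) \<in> osum Tm Tp" and "((pm', pp'), (qm', qp')) \<in> osum Tm Tp"
  shows "((pm, pp'), (qm, qp')) \<in> osum Tm Tp"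
  using assms by (simp add: osum_def)

lemma graph_DA_decoupled_boundary:
  fixes A :: cmat
  assumes dec: "graph_DA m A = osum Tm Tp"
    and bc: "(smat (2*\<i>) sig1 - A) *v y = (smat (2*\<i>) sig1 + A) *v x"
  shows "(smat (2*\<i>) sig1 + A) *v x = 0"
proof -
  obtain pm gm where pm: "H1_neg pm gm" "pm 0 = x"
    using H1_neg_with_trace by blast
  obtain pp gp where pp: "H1_pos pp gp" "pp 0 = y"
    using H1_pos_with_trace by blast
  define zm zp where "zm = dirac_out {..0} m (\<lambda>_. 0) (\<lambda>_. 0)"
    and "zp = dirac_out {0..} m (\<lambda>_. 0) (\<lambda>_. 0)"
  have "((pm, pp), (dirac_out {..0} m pm gm, dirac_out {0..} m pp gp)) \<in> osum Tm Tp"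
    unfolding dec[symmetric] graph_DA_def using pm pp bc by blast
  moreover have "(((\<lambda>_. 0), (\<lambda>_. 0)), (zm, zp)) \<in> osum Tm Tp"
    unfolding dec[symmetric] graph_DA_def zm_def zp_def using H1_zero by auto
  ultimately have "((pm, (\<lambda>_. 0)), (dirac_out {..0} m pm gm, zp)) \<in> graph_DA m A"
    unfolding dec by (rule osum_exchange)
  then have "(smat (2*\<i>) sig1 - A) *v 0 = (smat (2*\<i>) sig1 + A) *v x"
    unfolding graph_DA_def using pm by auto
  then show ?thesis
    by simp
qed

lemma graph_DA_eq_osum:
  fixes A :: cmat
  assumes "\<forall>x y. (smat (2*\<i>) sig1 - A) *v y = (smat (2*\<i>) sig1 + A) *v x
                  \<longrightarrow> (smat (2*\<i>) sig1 + A) *v x = 0"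
  shows "graph_DA m A = osum (graph_Dminus m A) (graph_Dplus m A)"
proof -
  have "(smat (2*\<i>) sig1 - A) *v y = (smat (2*\<i>) sig1 + A) *v x \<longleftrightarrow>
        (smat (2*\<i>) sig1 + A) *v x = 0 \<and> (smat (2*\<i>) sig1 - A) *v y = 0" for x y
    using assms by auto
  then show ?thesis
    unfolding graph_DA_def osum_def graph_Dminus_def graph_Dplus_def by blast
qed

theorem proposition2p2:
  fixes m :: real and A :: cmat
  shows "((\<exists>Tp Tm. graph_DA m A = osum Tm Tp) \<longleftrightarrow>
           (A = smat (2*\<i>) sig1 \<or> A = - smat (2*\<i>) sig1 \<or>
            (\<not> invertible (smat (2*\<i>) sig1 - A) \<and> \<not> invertible (smat (2*\<i>) sig1 + A))))
       \<and> ((\<exists>Tp Tm. graph_DA m A = osum Tm Tp) \<longrightarrow>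
            graph_DA m A = osum (graph_Dminus m A) (graph_Dplus m A))"
proof -
  have "(\<exists>Tp Tm. graph_DA m A = osum Tm Tp) \<longleftrightarrow>
        (\<forall>x y. (smat (2*\<i>) sig1 - A) *v y = (smat (2*\<i>) sig1 + A) *v x
                \<longrightarrow> (smat (2*\<i>) sig1 + A) *v x = 0)"
    using graph_DA_decoupled_boundary graph_DA_eq_osum by blast
  then show ?thesis
    using boundary_condition_splits_iff graph_DA_eq_osum by simp
qed

end
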